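(* For all integers $n,k\geq 1$, the RBM variety and the RBM model factor as Hadamard powers: $V^k_n=(V^1_n)^{[k]}$ and $M^k_n=(M^1_n)^{[k]}$.
   Context: For parameters $W\in\mathbb{R}^{k\times n}$, $b\in\mathbb{R}^n$, $c\in\mathbb{R}^k$ and $v\in\{0,1\}^n$, $h\in\{0,1\}^k$ put $\psi(v,h)=\exp(h^{\top}Wv+b^{\top}v+c^{\top}h)$ and $p(v)=\frac1Z\sum_{h}\psi(v,h)$ with $Z=\sum_{v,h}\psi(v,h)$. Equivalently, with $\gamma_i=e^{c_i}$, $\omega_{ij}=e^{W_{ij}}$, $\beta_j=e^{b_j}$, $p(v)=\frac1Z\beta_1^{v_1}\cdots\beta_n^{v_n}\prod_{i=1}^k(1+\gamma_i\omega_{i1}^{v_1}\cdots\omega_{in}^{v_n})$. The RBM model $M^k_n$ is the set of all such $(p(v))_{v\in\{0,1\}^n}$ in the open simplex $\Delta_{2^n-1}$. The RBM variety $V^k_n$ is the Zariski closure of $M^k_n$ in the complex projective space $\mathbb{P}^{2^n-1}$. For subvarieties $X,Y\subseteq\mathbb{P}^m$, the Hadamard product $X*Y$ is the closure of the image of the rational map $X\times Y\dashrightarrow\mathbb{P}^m$, $(x,y)\mapsto(x_0y_0:\dots:x_my_m)$; $X^{[1]}=X$ and $X^{[k]}=X*X^{[k-1]}$. For a subset $M$ of an open probability simplex, $M^{[k]}$ is the set of vectors obtained by componentwise multiplication of $k$ elements of $M$ followed by rescaling so that the coordinates sum to one. *)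

theory Defs
  imports Complex_Main
begin

text \<open>Binary states v in {0,1}^n are encoded as subsets of {..<n}
  (v_j = 1 iff j in v).  Points of C^(2^n) are functions on such subsets,
  zero outside the index set.  A subset of projective space P^(2^n-1) is
  represented by its affine cone (minus the origin).\<close>

definition states :: "nat \<Rightarrow> nat set set" where
  "states n = Pow {..<n}"

inductive_set poly_fun :: "'a set \<Rightarrow> (('a \<Rightarrow> complex) \<Rightarrow> complex) set"
  for I :: "'a set" where
  const: "(\<lambda>x. c) \<in> poly_fun I"
| coord: "i \<in> I \<Longrightarrow> (\<lambda>x. x i) \<in> poly_fun I"
| add: "f \<in> poly_fun I \<Longrightarrow> g \<in> poly_fun I \<Longrightarrow> (\<lambda>x. f x + g x) \<in> poly_fun I"
| mult: "f \<in> poly_fun I \<Longrightarrow> g \<in> poly_fun I \<Longrightarrow> (\<lambda>x. f x * g x) \<in> poly_fun I"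

definition homogeneous :: "(('a \<Rightarrow> complex) \<Rightarrow> complex) \<Rightarrow> nat \<Rightarrow> bool" where
  "homogeneous f d \<longleftrightarrow> (\<forall>c x. f (\<lambda>i. c * x i) = c ^ d * f x)"

definition proj_pts :: "'a set \<Rightarrow> ('a \<Rightarrow> complex) set" where
  "proj_pts I = {x. (\<forall>i. i \<notin> I \<longrightarrow> x i = 0) \<and> (\<exists>i\<in>I. x i \<noteq> 0)}"

definition zariski_closure :: "'a set \<Rightarrow> ('a \<Rightarrow> complex) set \<Rightarrow> ('a \<Rightarrow> complex) set" where
  "zariski_closure I S = {x \<in> proj_pts I. \<forall>f d. f \<in> poly_fun I \<and> homogeneous f d \<and>
       (\<forall>y\<in>S. f y = 0) \<longrightarrow> f x = 0}"

text \<open>Hadamard product of projective varieties: closure of the image of the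
  rational map (x,y) |-> x*y (defined where the product is nonzero).\<close>
definition hadamard :: "'a set \<Rightarrow> ('a \<Rightarrow> complex) set \<Rightarrow> ('a \<Rightarrow> complex) set \<Rightarrow> ('a \<Rightarrow> complex) set" where
  "hadamard I X Y = zariski_closure I
     {z. \<exists>x\<in>X. \<exists>y\<in>Y. z = (\<lambda>i. x i * y i) \<and> z \<in> proj_pts I}"

definition hadamard_pow :: "'a set \<Rightarrow> ('a \<Rightarrow> complex) set \<Rightarrow> nat \<Rightarrow> ('a \<Rightarrow> complex) set" where
  "hadamard_pow I X k = ((hadamard I X) ^^ (k - 1)) X"

definition rbm_psi :: "(nat \<Rightarrow> nat \<Rightarrow> real) \<Rightarrow> (nat \<Rightarrow> real) \<Rightarrow> (nat \<Rightarrow> real) \<Rightarrow> nat set \<Rightarrow> nat set \<Rightarrow> real" where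
  "rbm_psi W b c v h = exp ((\<Sum>i\<in>h. \<Sum>j\<in>v. W i j) + (\<Sum>j\<in>v. b j) + (\<Sum>i\<in>h. c i))"

definition rbm_dist :: "nat \<Rightarrow> nat \<Rightarrow> (nat \<Rightarrow> nat \<Rightarrow> real) \<Rightarrow> (nat \<Rightarrow> real) \<Rightarrow> (nat \<Rightarrow> real) \<Rightarrow> nat set \<Rightarrow> real" where
  "rbm_dist n k W b c = (\<lambda>v. if v \<in> states n then
      (\<Sum>h\<in>states k. rbm_psi W b c v h) / (\<Sum>v'\<in>states n. \<Sum>h\<in>states k. rbm_psi W b c v' h)
    else 0)"

definition rbm_model :: "nat \<Rightarrow> nat \<Rightarrow> (nat set \<Rightarrow> real) set" where
  "rbm_model n k = {p. \<exists>W b c. p = rbm_dist n k W b c}"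

definition rbm_variety :: "nat \<Rightarrow> nat \<Rightarrow> (nat set \<Rightarrow> complex) set" where
  "rbm_variety n k = zariski_closure (states n) ((\<lambda>p v. complex_of_real (p v)) ` rbm_model n k)"

definition normalize_dist :: "nat \<Rightarrow> (nat set \<Rightarrow> real) \<Rightarrow> (nat set \<Rightarrow> real)" where
  "normalize_dist n x = (\<lambda>v. x v / (\<Sum>v'\<in>states n. x v'))"

definition model_hadamard :: "nat \<Rightarrow> (nat set \<Rightarrow> real) set \<Rightarrow> (nat set \<Rightarrow> real) set \<Rightarrow> (nat set \<Rightarrow> real) set" where
  "model_hadamard n M N = {normalize_dist n (\<lambda>v. p v * q v) | p q. p \<in> M \<and> q \<in> N}"

definition model_hadamard_pow :: "nat \<Rightarrow> (nat set \<Rightarrow> real) set \<Rightarrow> nat \<Rightarrow> (nat set \<Rightarrow> real) set" where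
  "model_hadamard_pow n M k = ((model_hadamard n M) ^^ (k - 1)) M"

end

theory Submission imports Defs begin

text \<open>Summing out the hidden units factorises the unnormalised distribution as
  \<open>\<beta>\<^sup>v \<Prod>\<^sub>i (1 + \<gamma>\<^sub>i \<omega>\<^sub>i\<^sup>v)\<close>, one factor per hidden unit. Hence the
  componentwise product of a one-hidden-unit weight and a \<open>k\<close>-hidden-unit weight
  is a \<open>(k+1)\<close>-hidden-unit weight and conversely, so \<open>M\<^sup>k\<^sup>+\<^sup>1 = M\<^sup>1 * M\<^sup>k\<close> up
  to normalisation. Rescaling does not change Zariski closures of cones, and the
  Hadamard product commutes with Zariski closure: fixing one factor, a homogeneous
  polynomial composed with the linear map \<open>y \<mapsto> x * y\<close> is again homogeneous, so
  vanishing on \<open>A * B\<close> propagates first to \<open>A * cl B\<close> and then to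
  \<open>cl A * cl B\<close>.\<close>

definition rbm_weight ::
  "nat \<Rightarrow> nat \<Rightarrow> (nat \<Rightarrow> nat \<Rightarrow> real) \<Rightarrow> (nat \<Rightarrow> real) \<Rightarrow> (nat \<Rightarrow> real) \<Rightarrow> nat set \<Rightarrow> real" where
  "rbm_weight n k W b c v =
     (if v \<in> states n then exp (\<Sum>j\<in>v. b j) * (\<Prod>i<k. 1 + exp (c i + (\<Sum>j\<in>v. W i j))) else 0)"

lemma finite_states: "finite (states n)"
  and empty_in_states: "{} \<in> states n"
  unfolding states_def by auto

lemma sum_rbm_psi_states:
  "(\<Sum>h\<in>states k. rbm_psi W b c v h) = exp (\<Sum>j\<in>v. b j) * (\<Prod>i<k. 1 + exp (c i + (\<Sum>j\<in>v. W i j)))"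
proof -
  let ?e = "\<lambda>i. exp (c i + (\<Sum>j\<in>v. W i j))"
  have psi: "rbm_psi W b c v h = exp (\<Sum>j\<in>v. b j) * (\<Prod>i\<in>h. ?e i)" if "h \<in> states k" for h
  proof -
    have "finite h" using that unfolding states_def by (auto intro: finite_subset)
    then show ?thesis
      unfolding rbm_psi_def
      by (simp add: sum.distrib exp_add[symmetric] exp_sum[symmetric] algebra_simps)
  qed
  have "(\<Prod>i<k. ?e i + 1) = (\<Sum>h\<in>states k. \<Prod>i\<in>h. ?e i)"
    by (subst prod_add) (auto simp: states_def)
  then show ?thesis
    by (simp add: psi sum_distrib_left add.commute)
qed

lemma rbm_dist_eq_normalize_weight: "rbm_dist n k W b c = normalize_dist n (rbm_weight n k W b c)"
  unfolding rbm_dist_def normalize_dist_def rbm_weight_def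
  by (rule ext) (simp add: sum_rbm_psi_states cong: sum.cong)

lemma rbm_weight_pos: "v \<in> states n \<Longrightarrow> rbm_weight n k W b c v > 0"
  unfolding rbm_weight_def by (auto intro!: mult_pos_pos prod_pos simp: add_pos_pos)

lemma sum_rbm_weight_pos: "(\<Sum>v\<in>states n. rbm_weight n k W b c v) > 0"
  by (rule sum_pos) (auto simp: finite_states rbm_weight_pos intro: empty_in_states)

lemma rbm_weight_mult:
  "rbm_weight n 1 W' b' c' v * rbm_weight n k W b c v =
   rbm_weight n (Suc k) (W(k := W' 0)) (\<lambda>j. b' j + b j) (c(k := c' 0)) v"
proof -
  have "(\<Prod>i<k. 1 + exp ((c(k := c' 0)) i + (\<Sum>j\<in>v. (W(k := W' 0)) i j)))
      = (\<Prod>i<k. 1 + exp (c i + (\<Sum>j\<in>v. W i j)))"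
    by (rule prod.cong) auto
  then show ?thesis
    unfolding rbm_weight_def by (simp add: sum.distrib exp_add mult_ac)
qed

lemma normalize_dist_scale: "a \<noteq> 0 \<Longrightarrow> normalize_dist n (\<lambda>v. a * x v) = normalize_dist n x"
  unfolding normalize_dist_def by (simp add: sum_distrib_left[symmetric])

lemma normalize_dist_mult_normalize:
  assumes "(\<Sum>v\<in>states n. p v) \<noteq> 0" "(\<Sum>v\<in>states n. q v) \<noteq> 0"
  shows "normalize_dist n (\<lambda>v. normalize_dist n p v * normalize_dist n q v) =
         normalize_dist n (\<lambda>v. p v * q v)"
proof -
  let ?a = "1 / ((\<Sum>v\<in>states n. p v) * (\<Sum>v\<in>states n. q v))"
  have "(\<lambda>v. normalize_dist n p v * normalize_dist n q v) = (\<lambda>v. ?a * (p v * q v))"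
    unfolding normalize_dist_def by simp
  then show ?thesis
    using normalize_dist_scale[of ?a] assms by simp
qed

lemma rbm_dist_mult:
  "normalize_dist n (\<lambda>v. rbm_dist n 1 W' b' c' v * rbm_dist n k W b c v) =
   rbm_dist n (Suc k) (W(k := W' 0)) (\<lambda>j. b' j + b j) (c(k := c' 0))"
proof -
  have nonzero: "(\<Sum>v\<in>states n. rbm_weight n m W b c v) \<noteq> 0" for m W b c
    using sum_rbm_weight_pos by (metis less_irrefl)
  then show ?thesis
    unfolding rbm_dist_eq_normalize_weight
    by (simp only: normalize_dist_mult_normalize[OF nonzero nonzero] rbm_weight_mult)
qed

lemma rbm_model_Suc: "rbm_model n (Suc k) = model_hadamard n (rbm_model n 1) (rbm_model n k)"
proof (intro set_eqI iffI)
  fix p assume "p \<in> rbm_model n (Suc k)"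
  then obtain W b c where "p = rbm_dist n (Suc k) W b c"
    unfolding rbm_model_def by auto
  \<comment> \<open>split off hidden unit \<open>k\<close>; the other units keep their parameters since \<open>W(k := W k) = W\<close>\<close>
  then have "p = normalize_dist n
      (\<lambda>v. rbm_dist n 1 (\<lambda>_. W k) (\<lambda>_. 0) (\<lambda>_. c k) v * rbm_dist n k W b c v)"
    using rbm_dist_mult[where W' = "\<lambda>_. W k" and b' = "\<lambda>_. 0" and c' = "\<lambda>_. c k"] by simp
  then show "p \<in> model_hadamard n (rbm_model n 1) (rbm_model n k)"
    unfolding model_hadamard_def rbm_model_def by blast
next
  fix p assume "p \<in> model_hadamard n (rbm_model n 1) (rbm_model n k)"
  then obtain W' b' c' W b c where
    "p = normalize_dist n (\<lambda>v. rbm_dist n 1 W' b' c' v * rbm_dist n k W b c v)"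
    unfolding model_hadamard_def rbm_model_def by blast
  then have "p = rbm_dist n (Suc k) (W(k := W' 0)) (\<lambda>j. b' j + b j) (c(k := c' 0))"
    by (simp only: rbm_dist_mult)
  then show "p \<in> rbm_model n (Suc k)"
    unfolding rbm_model_def by blast
qed

lemma rbm_model_pos: "p \<in> rbm_model n k \<Longrightarrow> v \<in> states n \<Longrightarrow> p v > 0"
  unfolding rbm_model_def rbm_dist_eq_normalize_weight normalize_dist_def
  using sum_rbm_weight_pos rbm_weight_pos by auto

lemma rbm_model_outside_states: "p \<in> rbm_model n k \<Longrightarrow> v \<notin> states n \<Longrightarrow> p v = 0"
  unfolding rbm_model_def rbm_dist_eq_normalize_weight normalize_dist_def rbm_weight_def by auto

lemma of_real_in_proj_pts:
  assumes "\<And>v. v \<notin> states n \<Longrightarrow> p v = 0" and "p {} \<noteq> 0"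
  shows "(\<lambda>v. complex_of_real (p v)) \<in> proj_pts (states n)"
  unfolding proj_pts_def mem_Collect_eq
proof (intro conjI allI impI bexI[of _ "{}"])
  show "complex_of_real (p v) = 0" if "v \<notin> states n" for v
    using assms(1) that by simp
qed (use assms(2) empty_in_states in simp_all)

lemma poly_fun_compose_mult: "f \<in> poly_fun I \<Longrightarrow> (\<lambda>x. f (\<lambda>i. a i * x i)) \<in> poly_fun I"
proof (induction rule: poly_fun.induct)
  case (const c)
  show ?case by (rule poly_fun.const)
next
  case (coord i)
  show ?case by (rule poly_fun.mult[OF poly_fun.const poly_fun.coord[OF coord]])
next
  case (add f g)
  show ?case by (rule poly_fun.add[OF add.IH])
next
  case (mult f g)
  show ?case by (rule poly_fun.mult[OF mult.IH])
qed

lemma homogeneous_compose_mult: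
  "homogeneous f d \<Longrightarrow> homogeneous (\<lambda>x. f (\<lambda>i. a i * x i)) d"
  unfolding homogeneous_def by (simp add: mult.left_commute)

lemma zariski_closureI:
  assumes "x \<in> proj_pts I"
    and "\<And>f d. f \<in> poly_fun I \<Longrightarrow> homogeneous f d \<Longrightarrow> \<forall>y\<in>S. f y = 0 \<Longrightarrow> f x = 0"
  shows "x \<in> zariski_closure I S"
  using assms unfolding zariski_closure_def by blast

lemma zariski_closureD:
  assumes "x \<in> zariski_closure I S" "f \<in> poly_fun I" "homogeneous f d" "\<forall>y\<in>S. f y = 0"
  shows "f x = 0"
  using assms unfolding zariski_closure_def by blast

lemma zariski_closure_subset_proj_pts: "zariski_closure I S \<subseteq> proj_pts I"
  unfolding zariski_closure_def by blast

lemma subset_zariski_closure: "S \<subseteq> proj_pts I \<Longrightarrow> S \<subseteq> zariski_closure I S"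
  unfolding zariski_closure_def by blast

lemma zariski_closure_mono: "S \<subseteq> T \<Longrightarrow> zariski_closure I S \<subseteq> zariski_closure I T"
  unfolding zariski_closure_def by blast

lemma zariski_closure_subset_closure:
  assumes "S \<subseteq> zariski_closure I T"
  shows "zariski_closure I S \<subseteq> zariski_closure I T"
proof (intro subsetI zariski_closureI)
  fix x assume "x \<in> zariski_closure I S"
  then show "x \<in> proj_pts I"
    using zariski_closure_subset_proj_pts by blast
next
  fix x f d
  assume x: "x \<in> zariski_closure I S" and f: "f \<in> poly_fun I" "homogeneous f d" "\<forall>y\<in>T. f y = 0"
  have "\<forall>y\<in>S. f y = 0"
    using assms zariski_closureD[OF _ f] by blast
  then show "f x = 0"
    by (rule zariski_closureD[OF x f(1,2)])
qed

lemma zariski_closure_scaled_subset: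
  assumes "\<And>s. s \<in> S \<Longrightarrow> \<exists>t\<in>T. \<exists>c. s = (\<lambda>i. c * t i)"
  shows "zariski_closure I S \<subseteq> zariski_closure I T"
proof (intro subsetI zariski_closureI)
  fix x assume "x \<in> zariski_closure I S"
  then show "x \<in> proj_pts I"
    using zariski_closure_subset_proj_pts by blast
next
  fix x f d
  assume x: "x \<in> zariski_closure I S" and f: "f \<in> poly_fun I" "homogeneous f d" "\<forall>y\<in>T. f y = 0"
  have "f s = 0" if "s \<in> S" for s
  proof -
    obtain t c where "t \<in> T" "s = (\<lambda>i. c * t i)"
      using assms \<open>s \<in> S\<close> by blast
    then show ?thesis
      using f(2,3) unfolding homogeneous_def by simp
  qed
  then show "f x = 0"
    using zariski_closureD[OF x f(1,2)] by blast
qed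

lemma zariski_closure_scaled_eq:
  assumes "\<And>s. s \<in> S \<Longrightarrow> \<exists>t\<in>T. \<exists>c. s = (\<lambda>i. c * t i)"
    and "\<And>t. t \<in> T \<Longrightarrow> \<exists>s\<in>S. \<exists>c. t = (\<lambda>i. c * s i)"
  shows "zariski_closure I S = zariski_closure I T"
  using zariski_closure_scaled_subset[OF assms(1)] zariski_closure_scaled_subset[OF assms(2)] by (rule equalityI)

lemma vanishes_mult_zariski_closure:
  assumes "f \<in> poly_fun I" "homogeneous f d"
    and "\<And>y. y \<in> B \<Longrightarrow> f (\<lambda>i. a i * y i) = 0"
    and "y \<in> zariski_closure I B"
  shows "f (\<lambda>i. a i * y i) = 0"
  using zariski_closureD[OF assms(4) poly_fun_compose_mult[OF assms(1)] homogeneous_compose_mult[OF assms(2)]]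
    assms(3) by blast

lemma hadamard_zariski_closure:
  assumes "A \<subseteq> proj_pts I" "B \<subseteq> proj_pts I"
    and "\<And>a b. a \<in> A \<Longrightarrow> b \<in> B \<Longrightarrow> (\<lambda>i. a i * b i) \<in> proj_pts I"
  shows "hadamard I (zariski_closure I A) (zariski_closure I B) =
         zariski_closure I {\<lambda>i. a i * b i | a b. a \<in> A \<and> b \<in> B}"
    (is "hadamard I ?A ?B = zariski_closure I ?T")
proof
  have "A \<subseteq> ?A" "B \<subseteq> ?B"
    by (rule subset_zariski_closure[OF assms(1)], rule subset_zariski_closure[OF assms(2)])
  then show "zariski_closure I ?T \<subseteq> hadamard I ?A ?B"
    unfolding hadamard_def using assms(3) by (intro zariski_closure_mono) blast
next
  have product_in_closure: "(\<lambda>i. x i * y i) \<in> zariski_closure I ?T"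
    if "x \<in> ?A" "y \<in> ?B" "(\<lambda>i. x i * y i) \<in> proj_pts I" for x y
  proof -
    have "f (\<lambda>i. x i * y i) = 0"
      if f: "f \<in> poly_fun I" "homogeneous f d" "\<forall>t\<in>?T. f t = 0" for f d
    proof -
      have commute: "(\<lambda>i. u i * w i) = (\<lambda>i. w i * u i)" for u w :: "'a \<Rightarrow> complex"
        by (simp add: mult.commute)
      have "f (\<lambda>i. x i * b i) = 0" if "b \<in> B" for b
      proof -
        have "f (\<lambda>i. b i * a i) = 0" if "a \<in> A" for a
          using f(3) \<open>a \<in> A\<close> \<open>b \<in> B\<close> commute[of b a] by blast
        then have "f (\<lambda>i. b i * x i) = 0"
          by (rule vanishes_mult_zariski_closure[OF f(1,2) _ \<open>x \<in> ?A\<close>])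
        then show ?thesis
          by (simp only: commute[of x b])
      qed
      then show ?thesis
        by (rule vanishes_mult_zariski_closure[OF f(1,2) _ \<open>y \<in> ?B\<close>])
    qed
    then show ?thesis
      by (rule zariski_closureI[OF that(3)])
  qed
  show "hadamard I ?A ?B \<subseteq> zariski_closure I ?T"
    unfolding hadamard_def
    by (rule zariski_closure_subset_closure) (auto intro: product_in_closure)
qed

lemma rbm_variety_Suc:
  "rbm_variety n (Suc k) = hadamard (states n) (rbm_variety n 1) (rbm_variety n k)"
proof -
  let ?C = "\<lambda>p v. complex_of_real (p v)"
  let ?prod = "\<lambda>p q v. ?C p v * ?C q v"
  have in_proj_pts: "?C p \<in> proj_pts (states n)" "?prod p q \<in> proj_pts (states n)"
    if p: "p \<in> rbm_model n m" and q: "q \<in> rbm_model n m'" for p q m m'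
  proof -
    have "p {} \<noteq> 0" "q {} \<noteq> 0"
      using rbm_model_pos[OF p empty_in_states] rbm_model_pos[OF q empty_in_states] by simp_all
    moreover have "p v = 0" if "v \<notin> states n" for v
      using rbm_model_outside_states[OF p that] .
    ultimately show "?C p \<in> proj_pts (states n)" "?prod p q \<in> proj_pts (states n)"
      using of_real_in_proj_pts[of n p] of_real_in_proj_pts[of n "\<lambda>v. p v * q v"] by simp_all
  qed
  have normalize_prod: "?C (normalize_dist n (\<lambda>v. p v * q v)) =
      (\<lambda>v. complex_of_real (1 / (\<Sum>v\<in>states n. p v * q v)) * ?prod p q v)" for p q
    unfolding normalize_dist_def by auto
  have prod_normalize: "?prod p q =
      (\<lambda>v. complex_of_real (\<Sum>v\<in>states n. p v * q v) * ?C (normalize_dist n (\<lambda>v. p v * q v)) v)"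
    if "p \<in> rbm_model n 1" "q \<in> rbm_model n k" for p q
  proof -
    have "(\<Sum>v\<in>states n. p v * q v) > 0"
      using that by (intro sum_pos) (auto simp: finite_states rbm_model_pos intro: empty_in_states)
    then have "(\<Sum>v\<in>states n. p v * q v) * (p v * q v / (\<Sum>v\<in>states n. p v * q v)) = p v * q v" for v
      by simp
    then show ?thesis
      unfolding normalize_dist_def of_real_mult[symmetric] by (simp only:)
  qed
  let ?P = "{\<lambda>v. x v * y v | x y. x \<in> ?C ` rbm_model n 1 \<and> y \<in> ?C ` rbm_model n k}"
  let ?N = "?C ` {normalize_dist n (\<lambda>v. p v * q v) | p q. p \<in> rbm_model n 1 \<and> q \<in> rbm_model n k}"
  have "hadamard (states n) (rbm_variety n 1) (rbm_variety n k) = zariski_closure (states n) ?P"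
    unfolding rbm_variety_def by (rule hadamard_zariski_closure) (use in_proj_pts in auto)
  also have "\<dots> = zariski_closure (states n) ?N"
  proof (rule zariski_closure_scaled_eq)
    fix s assume "s \<in> ?P"
    then obtain p q where pq: "p \<in> rbm_model n 1" "q \<in> rbm_model n k" and "s = ?prod p q"
      by blast
    show "\<exists>t\<in>?N. \<exists>c. s = (\<lambda>i. c * t i)"
    proof (intro bexI exI)
      show "s = (\<lambda>v. complex_of_real (\<Sum>v\<in>states n. p v * q v) *
          ?C (normalize_dist n (\<lambda>v. p v * q v)) v)"
        using \<open>s = ?prod p q\<close> prod_normalize[OF pq] by simp
      show "?C (normalize_dist n (\<lambda>v. p v * q v)) \<in> ?N"
        using pq by blast
    qed
  next
    fix t assume "t \<in> ?N"
    then obtain p q where pq: "p \<in> rbm_model n 1" "q \<in> rbm_model n k"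
      and "t = ?C (normalize_dist n (\<lambda>v. p v * q v))"
      by blast
    show "\<exists>s\<in>?P. \<exists>c. t = (\<lambda>i. c * s i)"
    proof (intro bexI exI)
      show "t = (\<lambda>v. complex_of_real (1 / (\<Sum>v\<in>states n. p v * q v)) * ?prod p q v)"
        using \<open>t = ?C (normalize_dist n (\<lambda>v. p v * q v))\<close> normalize_prod by simp
      show "?prod p q \<in> ?P"
        unfolding mem_Collect_eq
        by (rule exI[of _ "?C p"], rule exI[of _ "?C q"]) (use pq in blast)
    qed
  qed
  also have "\<dots> = rbm_variety n (Suc k)"
    unfolding rbm_variety_def rbm_model_Suc model_hadamard_def ..
  finally show ?thesis ..
qed

lemma funpow_eq_if_Suc_step:
  assumes "\<And>k. f (Suc k) = g (f k)"
  shows "(g ^^ m) (f 0) = f m"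
  by (induction m) (simp_all add: assms)

theorem proposition2p1:
  fixes n k :: nat
  assumes "n \<ge> 1" and "k \<ge> 1"
  shows "rbm_variety n k = hadamard_pow (states n) (rbm_variety n 1) k
       \<and> rbm_model n k = model_hadamard_pow n (rbm_model n 1) k"
proof -
  obtain m where k: "k = Suc m"
    using assms(2) by (cases k) auto
  have "(hadamard (states n) (rbm_variety n 1) ^^ m) (rbm_variety n 1) = rbm_variety n (Suc m)"
    using funpow_eq_if_Suc_step[where f = "\<lambda>m. rbm_variety n (Suc m)", OF rbm_variety_Suc] by simp
  moreover have "(model_hadamard n (rbm_model n 1) ^^ m) (rbm_model n 1) = rbm_model n (Suc m)"
    using funpow_eq_if_Suc_step[where f = "\<lambda>m. rbm_model n (Suc m)", OF rbm_model_Suc] by simp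
  ultimately show ?thesis
    unfolding hadamard_pow_def model_hadamard_pow_def k by simp
qed

end
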